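(* Let $\omega$ be an LTL$_f$ formula and $\mathcal{E}$ an LTL$_f$ environment specification over $\mathcal{Y}\cup\mathcal{X}$, and let $\sigma_{ag}$ be an agent strategy. Then: (1) The agent anticipates passive responsibility for $\omega$ under $\sigma_{ag}$ and $\mathcal{E}$ if and only if $\sigma_{ag}$ is not dominant for $\neg\omega$ under $\mathcal{E}$. (2) The agent anticipates inexcusable passive responsibility for $\omega$ under $\sigma_{ag}$ and $\mathcal{E}$ if and only if $\sigma_{ag}$ is not best-effort for $\neg\omega$ under $\mathcal{E}$. (3) The agent anticipates active responsibility for $\omega$ under $\sigma_{ag}$ and $\mathcal{E}$ if and only if $\sigma_{ag}$ is winning for $\omega$ under $\mathcal{E}$ and there exists an agent strategy $\sigma'_{ag}$ that is weak for $\neg\omega$ under $\mathcal{E}$.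
   Context: Let $\mathcal{Y}$ and $\mathcal{X}$ be disjoint finite sets of atomic propositions, controlled by the agent and the environment respectively. LTL$_f$ formulas over $\mathcal{Y}\cup\mathcal{X}$ (built from atoms, $\neg$, $\wedge$, strong next $\circ$, until $\mathcal{U}$; weak next $\bullet\omega:=\neg\circ\neg\omega$) are interpreted over finite nonempty traces over $2^{\mathcal{Y}\cup\mathcal{X}}$ with the standard finite-trace semantics ($\pi,i\models\circ\omega$ iff $i<|\pi|-1$ and $\pi,i+1\models\omega$); $\pi\models\omega$ means $\pi,0\models\omega$. An agent strategy is a function $\sigma_{ag}:(2^{\mathcal{X}})^*\to 2^{\mathcal{Y}}\cup\{\mathit{stop}\}$ that is stopping: along every infinite sequence of environment moves there is $k$ such that $\sigma_{ag}$ returns $\mathit{stop}$ on all prefixes of length $\ge k$ and not on shorter prefixes. An environment strategy is a function $\sigma_{env}:(2^{\mathcal{Y}})^+\to 2^{\mathcal{X}}$. The agent moves first. The play $\mathrm{play}(\sigma_{ag},\sigma_{env})$ is the shortest finite trace $(Y_0\cup X_0)\cdots(Y_n\cup X_n)$ with $Y_0=\sigma_{ag}(\lambda)$, $Y_i=\sigma_{ag}(X_0\cdots X_{i-1})$ for $i>0$, $X_j=\sigma_{env}(Y_0\cdots Y_j)$ for all $j$, and $\sigma_{ag}(X_0\cdots X_n)=\mathit{stop}$. An environment strategy enforces an LTL$_f$ formula $\psi$ if for every agent strategy, every finite nonempty prefix of the (possibly infinite) sequence of moves generated by the two strategies satisfies $\psi$. An environment specification is an LTL$_f$ formula $\mathcal{E}$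 enforced by at least one environment strategy; $\Sigma_{\mathcal{E}}$ denotes the set of environment strategies enforcing $\mathcal{E}$. An agent strategy $\sigma_{ag}$ is winning for $\omega$ under $\mathcal{E}$ if $\mathrm{play}(\sigma_{ag},\sigma_{env})\models\omega$ for all $\sigma_{env}\in\Sigma_{\mathcal{E}}$; it is weak for $\omega$ under $\mathcal{E}$ if this holds for some $\sigma_{env}\in\Sigma_{\mathcal{E}}$. For agent strategies $\sigma_1,\sigma_2$: $\sigma_1\ge_{\omega|\mathcal{E}}\sigma_2$ ($\sigma_1$ dominates $\sigma_2$) if for every $\sigma_{env}\in\Sigma_{\mathcal{E}}$, $\mathrm{play}(\sigma_2,\sigma_{env})\models\omega$ implies $\mathrm{play}(\sigma_1,\sigma_{env})\models\omega$; $\sigma_1>_{\omega|\mathcal{E}}\sigma_2$ if $\sigma_1\ge_{\omega|\mathcal{E}}\sigma_2$ and not $\sigma_2\ge_{\omega|\mathcal{E}}\sigma_1$. $\sigma_{ag}$ is dominant for $\omega$ under $\mathcal{E}$ if $\sigma_{ag}\ge_{\omega|\mathcal{E}}\sigma'$ for every agent strategy $\sigma'$; it is best-effort for $\omega$ under $\mathcal{E}$ if there is no agent strategy $\sigma'$ with $\sigma'>_{\omega|\mathcal{E}}\sigma_{ag}$. Responsibility notions. The agent is attributed passive responsibility for $\omega$ under $\sigma_{ag}$ and $\sigma_{env}\in\Sigma_{\mathcal{E}}$ if $\mathrm{play}(\sigma_{ag},\sigma_{env})\models\omega$ and there is an agent strategy $\sigma'_{ag}$ with $\mathrm{play}(\sigma'_{ag},\sigma_{env})\models\neg\omega$;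 it is attributed inexcusable passive responsibility if moreover such $\sigma'_{ag}$ can be chosen with $\sigma'_{ag}\ge_{\neg\omega|\mathcal{E}}\sigma_{ag}$. The agent anticipates (inexcusable) passive responsibility for $\omega$ under $\sigma_{ag}$ and $\mathcal{E}$ if there is $\sigma_{env}\in\Sigma_{\mathcal{E}}$ such that it is attributed (inexcusable) passive responsibility for $\omega$ under $\sigma_{ag}$ and $\sigma_{env}$. The agent anticipates (equivalently, is attributed) active responsibility for $\omega$ under $\sigma_{ag}$ and $\mathcal{E}$ if $\mathrm{play}(\sigma_{ag},\sigma_{env})\models\omega$ for every $\sigma_{env}\in\Sigma_{\mathcal{E}}$ and there exist an agent strategy $\sigma'_{ag}$ and $\sigma'_{env}\in\Sigma_{\mathcal{E}}$ with $\mathrm{play}(\sigma'_{ag},\sigma'_{env})\models\neg\omega$. *)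

theory Defs
  imports Main
begin

(* Atomic propositions: agent-controlled atoms of type 'y, environment-controlled
   atoms of type 'x (disjoint by construction, finite by type class).
   Formulas are over atoms ('y + 'x). *)

datatype 'p ltlf =
    Atom 'p
  | Neg "'p ltlf"
  | Conj "'p ltlf" "'p ltlf"
  | Next "'p ltlf"
  | Until "'p ltlf" "'p ltlf"

definition WNext :: "'p ltlf \<Rightarrow> 'p ltlf" where
  "WNext \<phi> = Neg (Next (Neg \<phi>))"

fun sem :: "'p set list \<Rightarrow> nat \<Rightarrow> 'p ltlf \<Rightarrow> bool" where
  "sem \<pi> i (Atom p) = (p \<in> \<pi> ! i)"
| "sem \<pi> i (Neg \<phi>) = (\<not> sem \<pi> i \<phi>)"
| "sem \<pi> i (Conj \<phi> \<psi>) = (sem \<pi> i \<phi> \<and> sem \<pi> i \<psi>)"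
| "sem \<pi> i (Next \<phi>) = (i < length \<pi> - 1 \<and> sem \<pi> (Suc i) \<phi>)"
| "sem \<pi> i (Until \<phi> \<psi>) =
     (\<exists>j. i \<le> j \<and> j < length \<pi> \<and> sem \<pi> j \<psi> \<and> (\<forall>k. i \<le> k \<and> k < j \<longrightarrow> sem \<pi> k \<phi>))"

definition models :: "'p set list \<Rightarrow> 'p ltlf \<Rightarrow> bool" where
  "models \<pi> \<phi> = sem \<pi> 0 \<phi>"

(* Agent strategies: None encodes 'stop'. *)
type_synonym ('x, 'y) ag_strat = "'x set list \<Rightarrow> 'y set option"
type_synonym ('y, 'x) env_strat = "'y set list \<Rightarrow> 'x set"

(* We require k \<ge> 1
   (the agent does not stop on the empty history), since plays are nonempty traces. *)
definition agent_strategy :: "('x, 'y) ag_strat \<Rightarrow> bool" where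
  "agent_strategy \<sigma> \<longleftrightarrow>
     (\<forall>f :: nat \<Rightarrow> 'x set. \<exists>k \<ge> 1. \<forall>n. \<sigma> (map f [0..<n]) = None \<longleftrightarrow> k \<le> n)"

fun hist :: "('x, 'y) ag_strat \<Rightarrow> ('y, 'x) env_strat \<Rightarrow> nat \<Rightarrow> ('y set \<times> 'x set) list" where
  "hist sa se 0 = []"
| "hist sa se (Suc n) =
     (let h = hist sa se n;
          Y = the (sa (map snd h));
          X = se (map fst h @ [Y])
      in h @ [(Y, X)])"

definition joint :: "'y set \<times> 'x set \<Rightarrow> ('y + 'x) set" where
  "joint p = Inl ` fst p \<union> Inr ` snd p"

definition play_len :: "('x, 'y) ag_strat \<Rightarrow> ('y, 'x) env_strat \<Rightarrow> nat" where
  "play_len sa se = (LEAST m. 1 \<le> m \<and> sa (map snd (hist sa se m)) = None)"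

definition play :: "('x, 'y) ag_strat \<Rightarrow> ('y, 'x) env_strat \<Rightarrow> ('y + 'x) set list" where
  "play sa se = map joint (hist sa se (play_len sa se))"

definition enforces :: "('y, 'x) env_strat \<Rightarrow> ('y + 'x) ltlf \<Rightarrow> bool" where
  "enforces se \<psi> \<longleftrightarrow>
     (\<forall>sa :: ('x, 'y) ag_strat. agent_strategy sa \<longrightarrow>
        (\<forall>n. 1 \<le> n \<and> n \<le> length (play sa se) \<longrightarrow> models (take n (play sa se)) \<psi>))"

definition env_spec :: "('y + 'x) ltlf \<Rightarrow> bool" where
  "env_spec E \<longleftrightarrow> (\<exists>se :: ('y, 'x) env_strat. enforces se E)"

definition Sigma_E :: "('y + 'x) ltlf \<Rightarrow> ('y, 'x) env_strat set" where
  "Sigma_E E = {se. enforces se E}"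

definition winning :: "('x, 'y) ag_strat \<Rightarrow> ('y + 'x) ltlf \<Rightarrow> ('y + 'x) ltlf \<Rightarrow> bool" where
  "winning sa \<omega> E \<longleftrightarrow> (\<forall>se \<in> Sigma_E E. models (play sa se) \<omega>)"

definition weak :: "('x, 'y) ag_strat \<Rightarrow> ('y + 'x) ltlf \<Rightarrow> ('y + 'x) ltlf \<Rightarrow> bool" where
  "weak sa \<omega> E \<longleftrightarrow> (\<exists>se \<in> Sigma_E E. models (play sa se) \<omega>)"

definition dominates ::
  "('y + 'x) ltlf \<Rightarrow> ('y + 'x) ltlf \<Rightarrow> ('x, 'y) ag_strat \<Rightarrow> ('x, 'y) ag_strat \<Rightarrow> bool" where
  "dominates \<omega> E s1 s2 \<longleftrightarrow>
     (\<forall>se \<in> Sigma_E E. models (play s2 se) \<omega> \<longrightarrow> models (play s1 se) \<omega>)"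

definition strictly_dominates ::
  "('y + 'x) ltlf \<Rightarrow> ('y + 'x) ltlf \<Rightarrow> ('x, 'y) ag_strat \<Rightarrow> ('x, 'y) ag_strat \<Rightarrow> bool" where
  "strictly_dominates \<omega> E s1 s2 \<longleftrightarrow> dominates \<omega> E s1 s2 \<and> \<not> dominates \<omega> E s2 s1"

definition dominant :: "('x, 'y) ag_strat \<Rightarrow> ('y + 'x) ltlf \<Rightarrow> ('y + 'x) ltlf \<Rightarrow> bool" where
  "dominant sa \<omega> E \<longleftrightarrow> (\<forall>s'. agent_strategy s' \<longrightarrow> dominates \<omega> E sa s')"

definition best_effort :: "('x, 'y) ag_strat \<Rightarrow> ('y + 'x) ltlf \<Rightarrow> ('y + 'x) ltlf \<Rightarrow> bool" where
  "best_effort sa \<omega> E \<longleftrightarrow> \<not> (\<exists>s'. agent_strategy s' \<and> strictly_dominates \<omega> E s' sa)"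

definition passive_resp ::
  "('y + 'x) ltlf \<Rightarrow> ('x, 'y) ag_strat \<Rightarrow> ('y, 'x) env_strat \<Rightarrow> bool" where
  "passive_resp \<omega> sa se \<longleftrightarrow>
     models (play sa se) \<omega> \<and> (\<exists>s'. agent_strategy s' \<and> models (play s' se) (Neg \<omega>))"

definition inexcusable_passive_resp ::
  "('y + 'x) ltlf \<Rightarrow> ('y + 'x) ltlf \<Rightarrow> ('x, 'y) ag_strat \<Rightarrow> ('y, 'x) env_strat \<Rightarrow> bool" where
  "inexcusable_passive_resp \<omega> E sa se \<longleftrightarrow>
     models (play sa se) \<omega> \<and>
     (\<exists>s'. agent_strategy s' \<and> models (play s' se) (Neg \<omega>) \<and> dominates (Neg \<omega>) E s' sa)"

definition anticipates_passive ::
  "('y + 'x) ltlf \<Rightarrow> ('x, 'y) ag_strat \<Rightarrow> ('y + 'x) ltlf \<Rightarrow> bool" where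
  "anticipates_passive \<omega> sa E \<longleftrightarrow> (\<exists>se \<in> Sigma_E E. passive_resp \<omega> sa se)"

definition anticipates_inexcusable_passive ::
  "('y + 'x) ltlf \<Rightarrow> ('x, 'y) ag_strat \<Rightarrow> ('y + 'x) ltlf \<Rightarrow> bool" where
  "anticipates_inexcusable_passive \<omega> sa E \<longleftrightarrow>
     (\<exists>se \<in> Sigma_E E. inexcusable_passive_resp \<omega> E sa se)"

definition anticipates_active ::
  "('y + 'x) ltlf \<Rightarrow> ('x, 'y) ag_strat \<Rightarrow> ('y + 'x) ltlf \<Rightarrow> bool" where
  "anticipates_active \<omega> sa E \<longleftrightarrow>
     (\<forall>se \<in> Sigma_E E. models (play sa se) \<omega>) \<and>
     (\<exists>s'. agent_strategy s' \<and> (\<exists>se' \<in> Sigma_E E. models (play s' se') (Neg \<omega>)))"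

end

theory Submission
  imports Defs
begin

text \<open>All three characterisations are reformulations of the definitions once one observes that
  a play violates \<open>\<not>\<omega>\<close> exactly when it satisfies \<open>\<omega>\<close>: a witness of (inexcusable) passive
  responsibility is precisely a strategy (strictly) outdoing \<open>\<sigma>\<^sub>a\<^sub>g\<close> for \<open>\<not>\<omega>\<close> on some
  environment in \<open>\<Sigma>\<^sub>\<E>\<close>.\<close>

lemma models_Neg [simp]: "models \<pi> (Neg \<phi>) \<longleftrightarrow> \<not> models \<pi> \<phi>"
  by (simp add: models_def)

lemma not_dominates_iff:
  "\<not> dominates \<phi> E s1 s2 \<longleftrightarrow>
     (\<exists>se \<in> Sigma_E E. models (play s2 se) \<phi> \<and> \<not> models (play s1 se) \<phi>)"
  by (auto simp: dominates_def)

lemma anticipates_passive_iff_not_dominant: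
  "anticipates_passive \<omega> sa E \<longleftrightarrow> \<not> dominant sa (Neg \<omega>) E"
  by (auto simp: anticipates_passive_def passive_resp_def dominant_def not_dominates_iff)

lemma anticipates_inexcusable_passive_iff_not_best_effort:
  "anticipates_inexcusable_passive \<omega> sa E \<longleftrightarrow> \<not> best_effort sa (Neg \<omega>) E"
proof
  assume "anticipates_inexcusable_passive \<omega> sa E"
  then obtain se s' where se: "se \<in> Sigma_E E" and "models (play sa se) \<omega>"
      and s': "agent_strategy s'" "models (play s' se) (Neg \<omega>)" "dominates (Neg \<omega>) E s' sa"
    by (auto simp: anticipates_inexcusable_passive_def inexcusable_passive_resp_def)
  then have "\<not> dominates (Neg \<omega>) E sa s'"
    by (auto simp: not_dominates_iff)
  with s' show "\<not> best_effort sa (Neg \<omega>) E"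
    by (auto simp: best_effort_def strictly_dominates_def)
next
  assume "\<not> best_effort sa (Neg \<omega>) E"
  then obtain s' where s': "agent_strategy s'" "dominates (Neg \<omega>) E s' sa"
      and "\<not> dominates (Neg \<omega>) E sa s'"
    by (auto simp: best_effort_def strictly_dominates_def)
  then obtain se where "se \<in> Sigma_E E" "models (play s' se) (Neg \<omega>)" "models (play sa se) \<omega>"
    by (auto simp: not_dominates_iff)
  with s' show "anticipates_inexcusable_passive \<omega> sa E"
    by (auto simp: anticipates_inexcusable_passive_def inexcusable_passive_resp_def)
qed

lemma anticipates_active_iff_winning_and_weak:
  "anticipates_active \<omega> sa E \<longleftrightarrow>
     winning sa \<omega> E \<and> (\<exists>s'. agent_strategy s' \<and> weak s' (Neg \<omega>) E)"
  by (simp add: anticipates_active_def winning_def weak_def)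

theorem theorem1:
  fixes \<omega> E :: "('y::finite + 'x::finite) ltlf"
    and sa :: "('x, 'y) ag_strat"
  assumes "env_spec E"
    and "agent_strategy sa"
  shows "(anticipates_passive \<omega> sa E \<longleftrightarrow> \<not> dominant sa (Neg \<omega>) E)
       \<and> (anticipates_inexcusable_passive \<omega> sa E \<longleftrightarrow> \<not> best_effort sa (Neg \<omega>) E)
       \<and> (anticipates_active \<omega> sa E \<longleftrightarrow>
            winning sa \<omega> E \<and> (\<exists>s'. agent_strategy s' \<and> weak s' (Neg \<omega>) E))"
  using anticipates_passive_iff_not_dominant
    anticipates_inexcusable_passive_iff_not_best_effort
    anticipates_active_iff_winning_and_weak
  by blast

end
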